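(* There exist an alphabet $A$ and words $\mathbf a,\mathbf b,\mathbf c,\mathbf d\in A^\ast$ with $\mathbf a\mathbf b=\mathbf c\mathbf d$ such that $\mathbf a:\mathbf b::_m\mathbf c:\mathbf d$ does not hold in $(A^\ast,\cdot,A^\ast)$.
   Context: $(A^\ast,\cdot,A^\ast)$ is the algebra whose universe is the set $A^\ast$ of all finite words over $A$ (including the empty word), with concatenation and every word as a constant. A justification is a pair of terms $s\to t$ with the variables of $t$ among those of $s$; monolinear justifications are those where $s,t$ contain only one fixed variable $x$, occurring at most once in $s$ and at most once in $t$. $\uparrow^m(\mathbf a\to\mathbf b)$ is the set of monolinear justifications $s\to t$ with $\mathbf a=s(\mathbf o)$, $\mathbf b=t(\mathbf o)$ for some value $\mathbf o$; $\uparrow^m(\mathbf a\to\mathbf b:\!\cdot\,\mathbf c\to\mathbf d):=\uparrow^m(\mathbf a\to\mathbf b)\cap\uparrow^m(\mathbf c\to\mathbf d)$. A monolinear justification is trivial if it lies in all sets $\uparrow^m(\mathbf a'\to\mathbf b':\!\cdot\,\mathbf c'\to\mathbf d')$. $\mathbf a\to\mathbf b:\!\cdot_m\,\mathbf c\to\mathbf d$ holds iff either (i) all justifications in $\uparrow^m(\mathbf a\to\mathbf b)\cup\uparrow^m(\mathbf c\to\mathbf d)$ are trivial, or (ii) $J_{\mathbf d}:=\uparrow^m(\mathbf a\to\mathbf b:\!\cdot\,\mathbf c\to\mathbf d)$ contains a non-trivial justification and for every $\mathbf d'$, $J_{\mathbf d}\subseteq J_{\mathbf d'}$ implies $J_{\mathbf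 d'}$ contains a non-trivial justification and $J_{\mathbf d'}\subseteq J_{\mathbf d}$ (ignoring trivial justifications). $\mathbf a:\mathbf b::_m\mathbf c:\mathbf d$ iff $\mathbf a\to\mathbf b:\!\cdot_m\,\mathbf c\to\mathbf d$, $\mathbf b\to\mathbf a:\!\cdot_m\,\mathbf d\to\mathbf c$, $\mathbf c\to\mathbf d:\!\cdot_m\,\mathbf a\to\mathbf b$, $\mathbf d\to\mathbf c:\!\cdot_m\,\mathbf b\to\mathbf a$ all hold. *)

theory Defs
  imports Main
begin

text \<open>Terms over the algebra (A*, concatenation, every word a constant) in the
  single fixed variable x (constructor Var).\<close>

datatype 'a trm = Var | Con "'a list" | Cat "'a trm" "'a trm"

fun nvar :: "'a trm \<Rightarrow> nat" where
  "nvar Var = 1"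
| "nvar (Con u) = 0"
| "nvar (Cat s t) = nvar s + nvar t"

fun consts_ok :: "'a set \<Rightarrow> 'a trm \<Rightarrow> bool" where
  "consts_ok A Var = True"
| "consts_ok A (Con u) = (u \<in> lists A)"
| "consts_ok A (Cat s t) = (consts_ok A s \<and> consts_ok A t)"

fun eval :: "'a trm \<Rightarrow> 'a list \<Rightarrow> 'a list" where
  "eval Var o' = o'"
| "eval (Con u) o' = u"
| "eval (Cat s t) o' = eval s o' @ eval t o'"

definition monolinear :: "'a set \<Rightarrow> 'a trm \<times> 'a trm \<Rightarrow> bool" where
  "monolinear A j \<longleftrightarrow> (case j of (s, t) \<Rightarrow>
     consts_ok A s \<and> consts_ok A t \<and> nvar s \<le> 1 \<and> nvar t \<le> 1
     \<and> (nvar t > 0 \<longrightarrow> nvar s > 0))"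

definition up :: "'a set \<Rightarrow> 'a list \<Rightarrow> 'a list \<Rightarrow> ('a trm \<times> 'a trm) set" where
  "up A a b = {(s, t). monolinear A (s, t) \<and>
      (\<exists>o' \<in> lists A. eval s o' = a \<and> eval t o' = b)}"

definition upJ :: "'a set \<Rightarrow> 'a list \<Rightarrow> 'a list \<Rightarrow> 'a list \<Rightarrow> 'a list
                   \<Rightarrow> ('a trm \<times> 'a trm) set" where
  "upJ A a b c d = up A a b \<inter> up A c d"

definition trivial :: "'a set \<Rightarrow> 'a trm \<times> 'a trm \<Rightarrow> bool" where
  "trivial A j \<longleftrightarrow> monolinear A j \<and>
     (\<forall>a'\<in>lists A. \<forall>b'\<in>lists A. \<forall>c'\<in>lists A. \<forall>d'\<in>lists A. j \<in> upJ A a' b' c' d')"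

definition nontriv :: "'a set \<Rightarrow> ('a trm \<times> 'a trm) set \<Rightarrow> ('a trm \<times> 'a trm) set" where
  "nontriv A J = {j \<in> J. \<not> trivial A j}"

definition arrow_m :: "'a set \<Rightarrow> 'a list \<Rightarrow> 'a list \<Rightarrow> 'a list \<Rightarrow> 'a list \<Rightarrow> bool" where
  "arrow_m A a b c d \<longleftrightarrow>
     (\<forall>j \<in> up A a b \<union> up A c d. trivial A j)
   \<or> (nontriv A (upJ A a b c d) \<noteq> {} \<and>
      (\<forall>d' \<in> lists A. nontriv A (upJ A a b c d) \<subseteq> nontriv A (upJ A a b c d') \<longrightarrow>
          nontriv A (upJ A a b c d') \<noteq> {} \<and>
          nontriv A (upJ A a b c d') \<subseteq> nontriv A (upJ A a b c d)))"

definition analogy_m :: "'a set \<Rightarrow> 'a list \<Rightarrow> 'a list \<Rightarrow> 'a list \<Rightarrow> 'a list \<Rightarrow> bool" where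
  "analogy_m A a b c d \<longleftrightarrow>
     arrow_m A a b c d \<and> arrow_m A b a d c \<and> arrow_m A c d a b \<and> arrow_m A d c b a"

end

theory Submission
  imports Defs
begin

text \<open>The proportion \<open>\<epsilon> : b :: b : \<epsilon>\<close> with \<open>b \<noteq> \<epsilon>\<close> fails. The constant justification
  \<open>\<epsilon> \<rightarrow> b\<close> is non-trivial, so \<open>\<epsilon> \<rightarrow> b :\<cdot>\<^sub>m b \<rightarrow> \<epsilon>\<close> would need a common non-trivial
  justification; but a monolinear \<open>s \<rightarrow> t\<close> with \<open>s(o\<^sub>1) = \<epsilon>\<close>, \<open>t(o\<^sub>1) = b\<close>, \<open>s(o\<^sub>2) = b\<close>,
  \<open>t(o\<^sub>2) = \<epsilon>\<close> cannot exist, since \<open>|s(o)| = |s(\<epsilon>)| + k |o|\<close> with \<open>k \<le> 1\<close> the number of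
  occurrences of \<open>x\<close> in \<open>s\<close>, and likewise for \<open>t\<close>.\<close>

lemma length_eval: "length (eval s w) = length (eval s []) + nvar s * length w"
  by (induction s) (auto simp: algebra_simps)

lemma upJ_Nil_swap_empty:
  assumes "b \<noteq> []"
  shows "upJ A [] b b [] = {}"
proof (rule ccontr)
  assume "upJ A [] b b [] \<noteq> {}"
  then obtain s t o1 o2 where "monolinear A (s, t)"
    and o1: "eval s o1 = []" "eval t o1 = b" and o2: "eval s o2 = b" "eval t o2 = []"
    unfolding upJ_def up_def by auto
  then have "nvar s \<le> 1" "nvar t \<le> 1"
    unfolding monolinear_def by auto
  moreover have "length (eval s []) + nvar s * length o1 = 0"
    "length (eval t []) + nvar t * length o1 = length b"
    "length (eval s []) + nvar s * length o2 = length b"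
    "length (eval t []) + nvar t * length o2 = 0"
    using o1 o2 length_eval[of s o1] length_eval[of t o1] length_eval[of s o2] length_eval[of t o2]
    by simp_all
  ultimately show False
    using \<open>b \<noteq> []\<close> by (cases "nvar s"; cases "nvar t") auto
qed

lemma Con_Nil_in_up:
  assumes "b \<in> lists A"
  shows "(Con [], Con b) \<in> up A [] b"
  using assms unfolding up_def monolinear_def by auto

lemma Con_not_trivial:
  assumes "b \<noteq> []"
  shows "\<not> trivial A (Con a, Con b)"
proof
  assume "trivial A (Con a, Con b)"
  then have "(Con a, Con b) \<in> up A [] []"
    unfolding trivial_def upJ_def by blast
  with assms show False
    unfolding up_def by simp
qed

lemma not_arrow_m_Nil_swap:
  assumes "b \<in> lists A" "b \<noteq> []"
  shows "\<not> arrow_m A [] b b []"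
proof -
  have "\<not> (\<forall>j \<in> up A [] b \<union> up A b []. trivial A j)"
    using Con_Nil_in_up[OF assms(1)] Con_not_trivial[OF assms(2)] by blast
  moreover have "nontriv A (upJ A [] b b []) = {}"
    unfolding nontriv_def upJ_Nil_swap_empty[OF assms(2)] by simp
  ultimately show ?thesis
    unfolding arrow_m_def by blast
qed

lemma not_analogy_m_Nil_swap:
  assumes "b \<in> lists A" "b \<noteq> []"
  shows "\<not> analogy_m A [] b b []"
  using not_arrow_m_Nil_swap[OF assms] unfolding analogy_m_def by blast

theorem mainTheorem13:
  shows "\<exists>A :: nat set. finite A \<and>
    (\<exists>a\<in>lists A. \<exists>b\<in>lists A. \<exists>c\<in>lists A. \<exists>d\<in>lists A.
        a @ b = c @ d \<and> \<not> analogy_m A a b c d)"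
proof -
  have "\<not> analogy_m {0::nat} [] [0] [0] []"
    by (rule not_analogy_m_Nil_swap) simp_all
  moreover have "[] \<in> lists {0::nat}" "[0] \<in> lists {0::nat}" by simp_all
  ultimately show ?thesis
    by (metis append_Nil append_Nil2 finite.emptyI finite_insert)
qed

end
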